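(* Let $q$ be a prime and $P\ge2$, $M\ge1$, $K\ge1$ integers. Define $$E_2(q,P,M,K):=\sum_{\chi\ne\chi_0}\sum_{m=1}^{M}\frac1m\sum_{k>K}\frac{\mu(k)}{k}\log\bigl(L_P(km,\chi^{km})\bigr).$$ Then $$|E_2(q,P,M,K)|\le\frac{2P(q-1)}{K^2(P-1)(P^K-1)},$$ a bound independent of $M$.
   Context: $\chi$ runs over the non-principal Dirichlet characters modulo $q$ ($\chi_0$ principal), $\mu$ is the Möbius function, and for a Dirichlet character $\chi$ and $\Re(s)>1$ (or $\Re(s)\ge1$ when $\chi$ is non-principal), $L_P(s,\chi):=\prod_{p>P}\bigl(1-\chi(p)p^{-s}\bigr)^{-1}=L(s,\chi)\prod_{p\le P}\bigl(1-\chi(p)p^{-s}\bigr)$, with $\log$ the branch given by $\log L_P(s,\chi)=-\sum_{p>P}\log(1-\chi(p)p^{-s})$ using the principal logarithm series. *)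

theory Defs
  imports "HOL-Analysis.Analysis" "HOL-Computational_Algebra.Primes" "HOL-Computational_Algebra.Squarefree"
begin

definition dirichlet_char :: "nat \<Rightarrow> (nat \<Rightarrow> complex) \<Rightarrow> bool" where
  "dirichlet_char q chi \<longleftrightarrow>
     (\<forall>m n. chi (m * n) = chi m * chi n) \<and> chi 1 = 1 \<and>
     (\<forall>n. chi (n + q) = chi n) \<and> (\<forall>n. chi n = 0 \<longleftrightarrow> \<not> coprime n q)"

definition principal_char :: "nat \<Rightarrow> nat \<Rightarrow> complex" where
  "principal_char q n = (if coprime n q then 1 else 0)"

definition moebius_mu :: "nat \<Rightarrow> int" where
  "moebius_mu n = (if n = 0 \<or> \<not> squarefree n then 0 else (-1) ^ card (prime_factors n))"

definition log_LP :: "nat \<Rightarrow> nat \<Rightarrow> (nat \<Rightarrow> complex) \<Rightarrow> complex" where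
  "log_LP P s chi = - (\<Sum>\<^sub>\<infinity>p\<in>{p. prime p \<and> p > P}. Ln (1 - chi p / of_nat p ^ s))"

definition E2 :: "nat \<Rightarrow> nat \<Rightarrow> nat \<Rightarrow> nat \<Rightarrow> complex" where
  "E2 q P M K = (\<Sum>chi\<in>{chi. dirichlet_char q chi \<and> chi \<noteq> principal_char q}.
      \<Sum>m=1..M. (1 / of_nat m) *
        (\<Sum>\<^sub>\<infinity>k\<in>{K<..}. (of_int (moebius_mu k) / of_nat k) *
            log_LP P (k * m) (\<lambda>n. chi n ^ (k * m))))"

end

theory Submission
  imports Defs "HOL-Number_Theory.Residue_Primitive_Roots"
begin

text \<open>
  A Dirichlet character modulo a prime q is determined by its value at a primitive root, which is
  a (q-1)-th root of unity; so there are at most q-1 characters, and each has modulus at most 1.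
  Since |Ln (1 + z)| \<le> 2|z| for |z| < 1/2, telescoping the sum of n^(-s) over n > P gives
  |log L_P(s,\<chi>)| \<le> 2/((s-1) P^(s-1)). With |\<mu>(k)| \<le> 1 and k(km-1) \<ge> K(K+1)m, the sum
  over k > K is dominated by a geometric series in P^(-m), leaving terms of size P^(-(K+1)m),
  which form a geometric series in m; hence the bound does not depend on M.
\<close>

lemma dirichlet_char_add_mult_modulus:
  assumes "dirichlet_char q chi"
  shows "chi (n + j * q) = chi n"
proof (induction j)
  case (Suc j)
  have "chi (n + Suc j * q) = chi (n + j * q + q)" by (simp add: algebra_simps)
  with assms Suc show ?case unfolding dirichlet_char_def by simp
qed simp

lemma dirichlet_char_cong:
  assumes "dirichlet_char q chi" "[m = n] (mod q)"
  shows "chi m = chi n"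
proof -
  have "chi k = chi (k mod q)" for k
    using dirichlet_char_add_mult_modulus[OF assms(1), of "k mod q" "k div q"] by simp
  with assms(2) show ?thesis unfolding cong_def by metis
qed

lemma dirichlet_char_eq_0:
  assumes "dirichlet_char q chi" "\<not> coprime n q"
  shows "chi n = 0"
  using assms unfolding dirichlet_char_def by blast

lemma dirichlet_char_power:
  assumes "dirichlet_char q chi"
  shows "chi (n ^ k) = chi n ^ k"
  using assms by (induction k) (auto simp: dirichlet_char_def)

lemma dirichlet_char_power_totient:
  assumes "dirichlet_char q chi" "coprime n q"
  shows "chi n ^ totient q = 1"
proof -
  have "chi (n ^ totient q) = chi 1"
    using dirichlet_char_cong[OF assms(1) euler_theorem[OF assms(2)]] .
  moreover have "chi 1 = 1" using assms(1) unfolding dirichlet_char_def by blast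
  ultimately show ?thesis by (simp add: dirichlet_char_power[OF assms(1)])
qed

lemma norm_dirichlet_char_le_1:
  assumes "dirichlet_char q chi" "q > 0"
  shows "norm (chi n) \<le> 1"
proof (cases "coprime n q")
  case True
  have "norm (chi n) ^ totient q = 1"
    using dirichlet_char_power_totient[OF assms(1) True] by (simp flip: norm_power)
  moreover have "totient q > 0" using assms(2) by simp
  ultimately show ?thesis using power_eq_imp_eq_base[of "norm (chi n)" "totient q" 1] by simp
next
  case False
  with assms(1) show ?thesis by (simp add: dirichlet_char_eq_0)
qed

lemma residue_primroot_power_cong:
  assumes "m > 1" "residue_primroot m g" "coprime n m"
  obtains i where "[g ^ i = n] (mod m)"
proof -
  have "n mod m \<in> totatives m"
    using assms by (auto simp: in_totatives_iff mod_greater_zero_iff_not_dvd coprime_absorb_right)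
  then have "n mod m \<in> (\<lambda>i. g ^ i mod m) ` {..<totient m}"
    using residue_primroot_is_generator[OF assms(1,2)] unfolding bij_betw_def by simp
  then show ?thesis using that unfolding cong_def by (auto simp: mod_mod_trivial)
qed

lemma
  assumes "prime q"
  shows finite_dirichlet_chars: "finite {chi. dirichlet_char q chi}"
    and card_dirichlet_chars_le: "card {chi. dirichlet_char q chi} \<le> q - 1"
proof -
  let ?C = "{chi. dirichlet_char q chi}" and ?R = "{z::complex. z ^ (q - 1) = 1}"
  have q1: "q > 1" using assms prime_gt_1_nat by blast
  obtain g where g: "residue_primroot q g" using prime_primitive_root_exists[OF q1 assms] by blast
  then have "coprime g q" by (simp add: residue_primroot_def coprime_commute)
  with assms have image: "(\<lambda>chi. chi g) ` ?C \<subseteq> ?R"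
    using dirichlet_char_power_totient[of q _ g] by (auto simp: totient_prime)
  have "chi1 n = chi2 n" if "dirichlet_char q chi1" "dirichlet_char q chi2" "chi1 g = chi2 g" for chi1 chi2 n
  proof (cases "coprime n q")
    case True
    then obtain i where "[g ^ i = n] (mod q)" using residue_primroot_power_cong[OF q1 g] by blast
    with that show ?thesis by (metis dirichlet_char_cong dirichlet_char_power)
  next
    case False
    with that show ?thesis by (simp add: dirichlet_char_eq_0)
  qed
  then have inj: "inj_on (\<lambda>chi. chi g) ?C" by (intro inj_onI) auto
  have finite: "finite ?R" using q1 by (intro finite_roots_unity) auto
  show "finite ?C" using inj_on_finite[OF inj image finite] .
  have "card ?C \<le> card ?R" using card_inj_on_le[OF inj image finite] .
  also have "card ?R = q - 1" using q1 by (intro card_roots_unity_eq) auto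
  finally show "card ?C \<le> q - 1" .
qed

lemma norm_infsum_le_finite_sums:
  fixes f :: "'a \<Rightarrow> 'b::banach"
  assumes "\<And>F. finite F \<Longrightarrow> F \<subseteq> A \<Longrightarrow> (\<Sum>x\<in>F. norm (f x)) \<le> B"
  shows "norm (infsum f A) \<le> B"
proof -
  have summable: "(\<lambda>x. norm (f x)) summable_on A"
    using assms by (intro nonneg_bdd_above_summable_on bdd_aboveI) auto
  then have "norm (infsum f A) \<le> infsum (\<lambda>x. norm (f x)) A"
    by (intro norm_infsum_bound) auto
  also have "\<dots> \<le> B" using summable assms by (intro infsum_le_finite_sums)
  finally show ?thesis .
qed

lemma sum_power_le_geometric:
  fixes y :: real
  assumes "0 \<le> y" "y < 1" "finite F" "F \<subseteq> {a..}"
  shows "(\<Sum>k\<in>F. y ^ k) \<le> y ^ a / (1 - y)"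
proof -
  define n where "n = Max (insert a F)"
  have "a \<le> n" "F \<subseteq> {a..n}" using assms(3,4) unfolding n_def by auto
  then have "(\<Sum>k\<in>F. y ^ k) \<le> (\<Sum>k=a..n. y ^ k)"
    using assms(1) by (intro sum_mono2) auto
  also have "\<dots> = (y ^ a - y ^ Suc n) / (1 - y)"
    using assms(2) \<open>a \<le> n\<close> by (subst sum_gp) auto
  also have "\<dots> \<le> y ^ a / (1 - y)" using assms(1,2) by (intro divide_right_mono) auto
  finally show ?thesis .
qed

lemma power_Suc_ge_mult: "(n + t + 1) * n ^ t \<le> (n + 1) ^ (t + 1 :: nat)"
proof (induction t)
  case (Suc t)
  have "(n + Suc t + 1) * n ^ Suc t \<le> (n + 1) * ((n + t + 1) * n ^ t)"
    by (simp add: algebra_simps)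
  also have "\<dots> \<le> (n + 1) * (n + 1) ^ (t + 1)" by (rule mult_le_mono2[OF Suc.IH])
  also have "\<dots> = (n + 1) ^ (Suc t + 1)" by simp
  finally show ?case .
qed simp

lemma inverse_power_Suc_le_diff:
  fixes N t :: nat
  assumes "N \<ge> 1" "t \<ge> 1"
  shows "1 / real (N + 1) ^ (t + 1) \<le> (1 / real N ^ t - 1 / real (N + 1) ^ t) / real t"
proof -
  have "real ((N + t + 1) * N ^ t) \<le> real ((N + 1) ^ (t + 1))"
    using power_Suc_ge_mult by (rule of_nat_mono)
  then have key: "real t * real N ^ t \<le> real (N + 1) * (real (N + 1) ^ t - real N ^ t)"
    by (simp add: algebra_simps)
  have "1 / (n * b) \<le> (1 / a - 1 / b) / t"
    if "0 < a" "0 < b" "0 < n" "0 < t" "t * a \<le> n * (b - a)" for a b n t :: real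
    using that by (simp add: field_simps)
  from this[OF _ _ _ _ key] assms show ?thesis by simp
qed

lemma sum_inverse_powers_greater_le:
  fixes P t :: nat
  assumes "P \<ge> 1" "t \<ge> 1" "finite F" "F \<subseteq> {P<..}"
  shows "(\<Sum>n\<in>F. 1 / real n ^ (t + 1)) \<le> 1 / (real t * real P ^ t)"
proof -
  have telescope: "(\<Sum>n\<in>{P<..N}. 1 / real n ^ (t + 1)) \<le> (1 / real P ^ t - 1 / real N ^ t) / real t"
    if "N \<ge> P" for N
    using that
  proof (induction N rule: dec_induct)
    case (step N)
    have "{P<..Suc N} = insert (Suc N) {P<..N}" using step.hyps by auto
    then have "(\<Sum>n\<in>{P<..Suc N}. 1 / real n ^ (t + 1))
        = 1 / real (N + 1) ^ (t + 1) + (\<Sum>n\<in>{P<..N}. 1 / real n ^ (t + 1))" by simp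
    also have "\<dots> \<le> (1 / real N ^ t - 1 / real (N + 1) ^ t) / real t
                    + (1 / real P ^ t - 1 / real N ^ t) / real t"
      using step assms inverse_power_Suc_le_diff[of N t] by (intro add_mono) auto
    finally show ?case by (simp add: diff_divide_distrib)
  qed simp
  define N where "N = Max (insert P F)"
  have "F \<subseteq> {P<..N}" using assms(3,4) unfolding N_def by auto
  then have "(\<Sum>n\<in>F. 1 / real n ^ (t + 1)) \<le> (\<Sum>n\<in>{P<..N}. 1 / real n ^ (t + 1))"
    by (intro sum_mono2) auto
  also have "\<dots> \<le> (1 / real P ^ t - 1 / real N ^ t) / real t"
    using assms(3) unfolding N_def by (intro telescope) auto
  also have "\<dots> \<le> (1 / real P ^ t) / real t" by (intro divide_right_mono) auto
  also have "\<dots> = 1 / (real t * real P ^ t)" by simp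
  finally show ?thesis .
qed

lemma norm_log_LP_le:
  fixes f :: "nat \<Rightarrow> complex"
  assumes P: "P \<ge> 2" and s: "s \<ge> 2" and f: "\<And>n. norm (f n) \<le> 1"
  shows "norm (log_LP P s f) \<le> 2 / (real (s - 1) * real P ^ (s - 1))"
proof -
  have norm_Ln: "norm (Ln (1 - f p / of_nat p ^ s)) \<le> 2 / real p ^ s" if "p > P" for p
  proof -
    have "norm (f p / of_nat p ^ s) \<le> 1 / real p ^ s"
      using f[of p] by (simp add: norm_divide norm_power divide_right_mono)
    moreover have "1 / real p ^ s < 1 / 2"
    proof -
      have "real p > 2" using that P by simp
      moreover have "real p \<le> real p ^ s" using that s by (intro self_le_power) auto
      ultimately have "real p ^ s > 2" by linarith
      then show ?thesis by (simp add: divide_less_eq)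
    qed
    ultimately have "norm (- (f p / of_nat p ^ s)) < 1 / 2" by simp
    from norm_Ln_le[OF this] show ?thesis
      using \<open>norm (f p / of_nat p ^ s) \<le> 1 / real p ^ s\<close> by simp
  qed
  have "(\<Sum>p\<in>F. norm (Ln (1 - f p / of_nat p ^ s))) \<le> 2 / (real (s - 1) * real P ^ (s - 1))"
    if "finite F" "F \<subseteq> {p. prime p \<and> p > P}" for F
  proof -
    have "(\<Sum>p\<in>F. norm (Ln (1 - f p / of_nat p ^ s))) \<le> 2 * (\<Sum>p\<in>F. 1 / real p ^ ((s - 1) + 1))"
      using that norm_Ln s by (auto simp: sum_distrib_left intro: sum_mono)
    also have "\<dots> \<le> 2 * (1 / (real (s - 1) * real P ^ (s - 1)))"
      using that P s by (intro mult_left_mono sum_inverse_powers_greater_le) auto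
    finally show ?thesis by simp
  qed
  then show ?thesis
    unfolding log_LP_def norm_minus_cancel by (rule norm_infsum_le_finite_sums)
qed

definition mu_log_LP_tail :: "nat \<Rightarrow> nat \<Rightarrow> nat \<Rightarrow> (nat \<Rightarrow> complex) \<Rightarrow> complex" where
  "mu_log_LP_tail P K m chi =
     (\<Sum>\<^sub>\<infinity>k\<in>{K<..}. (of_int (moebius_mu k) / of_nat k) * log_LP P (k * m) (\<lambda>n. chi n ^ (k * m)))"

definition E2_char_term :: "nat \<Rightarrow> nat \<Rightarrow> nat \<Rightarrow> (nat \<Rightarrow> complex) \<Rightarrow> complex" where
  "E2_char_term P M K chi = (\<Sum>m=1..M. (1 / of_nat m) * mu_log_LP_tail P K m chi)"

lemma E2_eq_sum_E2_char_term:
  "E2 q P M K = (\<Sum>chi | dirichlet_char q chi \<and> chi \<noteq> principal_char q. E2_char_term P M K chi)"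
  unfolding E2_def E2_char_term_def mu_log_LP_tail_def ..

lemma norm_moebius_mu_le_1: "norm (of_int (moebius_mu k) :: complex) \<le> 1"
  unfolding moebius_mu_def by (auto simp: norm_power)

lemma mult_Suc_le_mult_pred:
  fixes K k m :: nat
  assumes "K < k" "m \<ge> 1"
  shows "K * (K + 1) * m \<le> k * (k * m - 1)"
proof -
  have "(K + 1) * m \<le> k * m" using assms by (intro mult_le_mono1) simp
  then have "K * m + m \<le> k * m" by simp
  then have "K * m \<le> k * m - 1" using assms by linarith
  moreover have "K + 1 \<le> k" using assms by simp
  ultimately have "(K + 1) * (K * m) \<le> k * (k * m - 1)" by (intro mult_le_mono)
  then show ?thesis by (simp add: algebra_simps)
qed

lemma norm_mu_log_LP_term_le:
  fixes chi :: "nat \<Rightarrow> complex"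
  assumes P: "P \<ge> 2" and K: "K \<ge> 1" "K < k" and m: "m \<ge> 1" and chi: "\<And>n. norm (chi n) \<le> 1"
  shows "norm (of_int (moebius_mu k) / of_nat k * log_LP P (k * m) (\<lambda>n. chi n ^ (k * m)))
    \<le> 2 * real P / (real K * (real K + 1) * real m) * (1 / real P ^ m) ^ k"
proof -
  define j where "j = k * m"
  have "k \<le> j" using m unfolding j_def by simp
  with K have j: "j \<ge> 2" by linarith
  have "norm (log_LP P j (\<lambda>n. chi n ^ j)) \<le> 2 / (real (j - 1) * real P ^ (j - 1))"
    using chi by (intro norm_log_LP_le P j) (simp add: norm_power power_le_one)
  then have "norm (of_int (moebius_mu k) / of_nat k * log_LP P j (\<lambda>n. chi n ^ j))
      \<le> 1 / real k * (2 / (real (j - 1) * real P ^ (j - 1)))"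
    unfolding norm_mult norm_divide norm_of_nat
    using norm_moebius_mu_le_1[of k] by (intro mult_mono divide_right_mono) auto
  also have "\<dots> = 2 * real P / (real k * real (j - 1) * real P ^ j)"
    using P j by (simp add: power_eq_if)
  also have "\<dots> \<le> 2 * real P / (real K * (real K + 1) * real m * real P ^ j)"
  proof -
    have "real (K * (K + 1) * m) \<le> real (k * (j - 1))"
      unfolding j_def using mult_Suc_le_mult_pred[OF K(2) m] by (rule of_nat_mono)
    then have "real K * (real K + 1) * real m \<le> real k * real (j - 1)"
      by (simp only: of_nat_mult of_nat_add of_nat_1)
    then show ?thesis using K m P j by (intro divide_left_mono mult_right_mono mult_pos_pos) auto
  qed
  also have "\<dots> = 2 * real P / (real K * (real K + 1) * real m) * (1 / real P ^ m) ^ k"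
    unfolding j_def by (simp add: power_mult[symmetric] mult.commute power_one_over)
  finally show ?thesis unfolding j_def .
qed

lemma norm_mu_log_LP_tail_le:
  fixes chi :: "nat \<Rightarrow> complex"
  assumes P: "P \<ge> 2" and K: "K \<ge> 1" and m: "m \<ge> 1" and chi: "\<And>n. norm (chi n) \<le> 1"
  shows "norm (mu_log_LP_tail P K m chi)
    \<le> 2 * real P ^ 2 / (real K * (real K + 1) * (real P - 1)) / real m * (1 / real P ^ (K + 1)) ^ m"
proof -
  define y where "y = 1 / real P ^ m"
  define C where "C = 2 * real P / (real K * (real K + 1) * real m)"
  have "real P \<le> real P ^ m" using P m by (intro self_le_power) auto
  then have y: "0 \<le> y" "y \<le> 1 / real P" unfolding y_def using P by (auto intro: divide_left_mono)
  moreover have "1 / real P < 1" using P by simp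
  ultimately have "y < 1" by linarith
  have "(\<Sum>k\<in>F. norm (of_int (moebius_mu k) / of_nat k * log_LP P (k * m) (\<lambda>n. chi n ^ (k * m))))
      \<le> C * (y ^ (K + 1) / (1 - y))" if "finite F" "F \<subseteq> {K<..}" for F
  proof -
    have "(\<Sum>k\<in>F. norm (of_int (moebius_mu k) / of_nat k * log_LP P (k * m) (\<lambda>n. chi n ^ (k * m))))
        \<le> (\<Sum>k\<in>F. C * y ^ k)"
      using that norm_mu_log_LP_term_le[OF P K _ m chi] unfolding C_def y_def by (intro sum_mono) auto
    also have "\<dots> \<le> C * (y ^ (K + 1) / (1 - y))"
      unfolding sum_distrib_left[symmetric] using that y \<open>y < 1\<close>
      by (intro mult_left_mono sum_power_le_geometric) (auto simp: C_def)
    finally show ?thesis .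
  qed
  then have "norm (mu_log_LP_tail P K m chi) \<le> C * (y ^ (K + 1) / (1 - y))"
    unfolding mu_log_LP_tail_def by (rule norm_infsum_le_finite_sums)
  also have "\<dots> \<le> C * (y ^ (K + 1) * (real P / (real P - 1)))"
  proof -
    have "1 / (1 - y) \<le> real P / (real P - 1)"
      using y P \<open>y < 1\<close> by (simp add: field_simps)
    from mult_left_mono[OF this, of "y ^ (K + 1)"] y
    have "y ^ (K + 1) / (1 - y) \<le> y ^ (K + 1) * (real P / (real P - 1))" by simp
    then show ?thesis by (intro mult_left_mono) (auto simp: C_def)
  qed
  also have "\<dots> = 2 * real P ^ 2 / (real K * (real K + 1) * (real P - 1)) / real m * (1 / real P ^ (K + 1)) ^ m"
  proof -
    have "(real P ^ m) ^ (K + 1) = (real P ^ (K + 1)) ^ m" by (metis power_mult mult.commute)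
    then have "y ^ (K + 1) = (1 / real P ^ (K + 1)) ^ m" unfolding y_def by (simp add: power_one_over)
    then show ?thesis unfolding C_def by (simp add: power2_eq_square mult_ac)
  qed
  finally show ?thesis .
qed

lemma geometric_tail_constant_le:
  fixes P K :: nat
  assumes "P \<ge> 2" "K \<ge> 1"
  shows "2 * real P ^ 2 / (real K * (real K + 1) * (real P - 1)) / (real P ^ (K + 1) - 1)
    \<le> 2 * real P / ((real K)^2 * (real P - 1) * (real P ^ K - 1))"
proof -
  define A where "A = real P ^ K"
  have "real P \<le> A" unfolding A_def using assms by (intro self_le_power) auto
  with assms have pos: "A - 1 > 0" "real P * A - 1 > 0"
    by (auto intro: less_le_trans[of 1 "real P" "real P * A"] simp: mult_le_cancel_left1)
  have "real K * (real P * (A - 1)) \<le> real K * (real P * A - 1)"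
    using assms by (intro mult_left_mono) (auto simp: algebra_simps)
  also have "\<dots> \<le> (real K + 1) * (real P * A - 1)" using pos by (intro mult_right_mono) auto
  finally have "real P * (real K * (A - 1)) \<le> 1 * ((real K + 1) * (real P * A - 1))"
    by (simp add: mult_ac)
  then have "real P / ((real K + 1) * (real P * A - 1)) \<le> 1 / (real K * (A - 1))"
    using assms pos by (subst frac_le_eq) (auto simp: divide_nonpos_pos)
  then have "2 * real P / (real K * (real P - 1)) * (real P / ((real K + 1) * (real P * A - 1)))
      \<le> 2 * real P / (real K * (real P - 1)) * (1 / (real K * (A - 1)))"
    using assms by (intro mult_left_mono) auto
  then show ?thesis unfolding A_def by (simp add: power2_eq_square mult_ac)
qed

lemma norm_E2_char_term_le:
  fixes chi :: "nat \<Rightarrow> complex"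
  assumes P: "P \<ge> 2" and K: "K \<ge> 1" and chi: "\<And>n. norm (chi n) \<le> 1"
  shows "norm (E2_char_term P M K chi) \<le> 2 * real P / ((real K)^2 * (real P - 1) * (real P ^ K - 1))"
proof -
  define A where "A = 2 * real P ^ 2 / (real K * (real K + 1) * (real P - 1))"
  define x where "x = 1 / real P ^ (K + 1)"
  have "1 < real P ^ (K + 1)" using P by (intro one_less_power) auto
  with P have x: "0 \<le> x" "x < 1" and A: "A \<ge> 0" unfolding x_def A_def by auto
  have "norm (E2_char_term P M K chi) \<le> (\<Sum>m=1..M. norm (1 / of_nat m * mu_log_LP_tail P K m chi))"
    unfolding E2_char_term_def by (rule norm_sum)
  also have "\<dots> \<le> (\<Sum>m=1..M. A * x ^ m)"
  proof (rule sum_mono)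
    fix m assume "m \<in> {1..M}"
    then have m: "m \<ge> 1" by simp
    have "norm (1 / of_nat m * mu_log_LP_tail P K m chi) = 1 / real m * norm (mu_log_LP_tail P K m chi)"
      by (simp add: norm_mult norm_divide)
    also have "\<dots> \<le> 1 / real m * (A / real m * x ^ m)"
      unfolding A_def x_def using norm_mu_log_LP_tail_le[of P K m chi, OF P K m chi]
      by (intro mult_left_mono) auto
    also have "\<dots> \<le> A * x ^ m"
    proof -
      have "1 \<le> real m" using m by simp
      from mult_mono[OF this this] have "A * x ^ m * 1 \<le> A * x ^ m * (real m * real m)"
        using A x by (intro mult_left_mono) auto
      then show ?thesis using m by (simp add: field_simps)
    qed
    finally show "norm (1 / of_nat m * mu_log_LP_tail P K m chi) \<le> A * x ^ m" .
  qed
  also have "\<dots> \<le> A * (x ^ 1 / (1 - x))"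
    unfolding sum_distrib_left[symmetric] using x A by (intro mult_left_mono sum_power_le_geometric) auto
  also have "\<dots> = A / (real P ^ (K + 1) - 1)"
    using P x unfolding x_def by (simp add: field_simps)
  also have "\<dots> \<le> 2 * real P / ((real K)^2 * (real P - 1) * (real P ^ K - 1))"
    unfolding A_def by (rule geometric_tail_constant_le[OF P K])
  finally show ?thesis .
qed

theorem mainTheorem8:
  fixes q P M K :: nat
  assumes "prime q" and "P \<ge> 2" and "M \<ge> 1" and "K \<ge> 1"
  shows "norm (E2 q P M K) \<le>
    2 * real P * (real q - 1) / ((real K)^2 * (real P - 1) * (real P ^ K - 1))"
proof -
  let ?S = "{chi. dirichlet_char q chi \<and> chi \<noteq> principal_char q}"
  let ?B = "2 * real P / ((real K)^2 * (real P - 1) * (real P ^ K - 1))"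
  have "card ?S \<le> card {chi. dirichlet_char q chi}"
    by (intro card_mono finite_dirichlet_chars assms(1)) auto
  also have "\<dots> \<le> q - 1" by (rule card_dirichlet_chars_le[OF assms(1)])
  finally have card: "real (card ?S) \<le> real q - 1"
    using prime_gt_1_nat[OF assms(1)] by (simp add: of_nat_diff)
  have "1 < real P ^ K" using assms(2,4) by (intro one_less_power) auto
  then have "?B \<ge> 0" using assms(2) by simp
  have "norm (E2 q P M K) \<le> (\<Sum>chi\<in>?S. norm (E2_char_term P M K chi))"
    unfolding E2_eq_sum_E2_char_term by (rule norm_sum)
  also have "\<dots> \<le> (\<Sum>chi\<in>?S. ?B)"
    using assms prime_gt_0_nat norm_dirichlet_char_le_1 by (intro sum_mono norm_E2_char_term_le) auto
  also have "\<dots> = real (card ?S) * ?B" by simp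
  also have "\<dots> \<le> (real q - 1) * ?B" using card \<open>?B \<ge> 0\<close> by (rule mult_right_mono)
  finally show ?thesis by (simp add: mult_ac)
qed

end
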